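(* Let $X,Y$ be sets and consider multirelations $X\leftrightarrow\mathcal{P}Y$. (1) For inner deterministic $R,S$: $R\sqsubseteq_\downarrow S\iff R\subseteq S$ and $R\sqsubseteq_\uparrow S\iff S\subseteq R$; consequently $R\sqsubseteq_\updownarrow S\iff R=S$. (2) $\sqsubseteq_\updownarrow$ is antisymmetric (hence a partial order) on the set of inner univalent multirelations. (3) $\sqsubseteq_\downarrow$, $\sqsubseteq_\uparrow$ and $\sqsubseteq_\updownarrow$ are antisymmetric (hence partial orders) on the set of outer univalent multirelations. (4) On outer deterministic multirelations these three partial orders coincide: for outer deterministic $R,S$, $R\sqsubseteq_\downarrow S\iff R\sqsubseteq_\uparrow S\iff R\sqsubseteq_\updownarrow S$.
   Context: $R^{\uparrow}=\{(a,A)\mid\exists B.(a,B)\in R\wedge B\subseteq A\}$, $R^{\downarrow}=\{(a,A)\mid\exists B.(a,B)\in R\wedge A\subseteq B\}$. $R\sqsubseteq_\uparrow S\iff S\subseteq R^{\uparrow}$; $R\sqsubseteq_\downarrow S\iff R\subseteq S^{\downarrow}$; $R\sqsubseteq_\updownarrow S\iff R\sqsubseteq_\downarrow S\wedge R\sqsubseteq_\uparrow S$. A multirelation $R$ is inner univalent if every $(a,B)\in R$ has $B$ empty or a singleton, inner deterministic if every $(a,B)\in R$ has $B$ a singleton; outer univalent if for each $a\in X$ there is at most one $B$ with $(a,B)\in R$, outer deterministic if for each $a\in X$ there is exactly one such $B$. *)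

theory Defs
  imports Main
begin

type_synonym ('a, 'b) mrel = "('a \<times> 'b set) set"

definition up_closure :: "('a, 'b) mrel \<Rightarrow> ('a, 'b) mrel" where
  "up_closure R = {(a, A). \<exists>B. (a, B) \<in> R \<and> B \<subseteq> A}"

definition down_closure :: "('a, 'b) mrel \<Rightarrow> ('a, 'b) mrel" where
  "down_closure R = {(a, A). \<exists>B. (a, B) \<in> R \<and> A \<subseteq> B}"

definition ref_up :: "('a, 'b) mrel \<Rightarrow> ('a, 'b) mrel \<Rightarrow> bool" where
  "ref_up R S \<longleftrightarrow> S \<subseteq> up_closure R"

definition ref_down :: "('a, 'b) mrel \<Rightarrow> ('a, 'b) mrel \<Rightarrow> bool" where
  "ref_down R S \<longleftrightarrow> R \<subseteq> down_closure S"

definition ref_updown :: "('a, 'b) mrel \<Rightarrow> ('a, 'b) mrel \<Rightarrow> bool" where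
  "ref_updown R S \<longleftrightarrow> ref_down R S \<and> ref_up R S"

definition inner_univalent :: "('a, 'b) mrel \<Rightarrow> bool" where
  "inner_univalent R \<longleftrightarrow> (\<forall>(a, B) \<in> R. B = {} \<or> (\<exists>b. B = {b}))"

definition inner_deterministic :: "('a, 'b) mrel \<Rightarrow> bool" where
  "inner_deterministic R \<longleftrightarrow> (\<forall>(a, B) \<in> R. \<exists>b. B = {b})"

definition outer_univalent :: "('a, 'b) mrel \<Rightarrow> bool" where
  "outer_univalent R \<longleftrightarrow> (\<forall>a. \<forall>B C. (a, B) \<in> R \<and> (a, C) \<in> R \<longrightarrow> B = C)"

definition outer_deterministic :: "('a, 'b) mrel \<Rightarrow> bool" where
  "outer_deterministic R \<longleftrightarrow> (\<forall>a. \<exists>!B. (a, B) \<in> R)"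

end

theory Submission
  imports Defs
begin

text \<open>Inner univalence leaves only the images {} and {b}: an empty image of R lies above some
  image of S, which must then be empty too, and a singleton lies below some image of S, which must
  then be the same singleton. Under outer univalence two refinements of the same kind, from R to S
  and back, lead from an image of R to the unique image of R again, squeezing the image of S in
  between. Under outer determinism every point has exactly one image on each side, and the
  refinement conditions in both directions just compare these two images.\<close>

lemma subset_down_closure: "R \<subseteq> down_closure R"
  unfolding down_closure_def by blast

lemma subset_up_closure: "R \<subseteq> up_closure R"
  unfolding up_closure_def by blast

lemma inner_deterministic_imp_inner_univalent:
  "inner_deterministic R \<Longrightarrow> inner_univalent R"
  unfolding inner_deterministic_def inner_univalent_def by blast

lemma ref_down_iff_subset:
  assumes "inner_deterministic R" and "inner_univalent S"
  shows "ref_down R S \<longleftrightarrow> R \<subseteq> S"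
proof
  assume "ref_down R S"
  show "R \<subseteq> S"
  proof clarify
    fix a B assume "(a, B) \<in> R"
    with assms(1) obtain b where b: "B = {b}"
      unfolding inner_deterministic_def by blast
    from \<open>ref_down R S\<close> \<open>(a, B) \<in> R\<close> obtain C where C: "(a, C) \<in> S" "B \<subseteq> C"
      unfolding ref_down_def down_closure_def by blast
    with assms(2) b have "C = B"
      unfolding inner_univalent_def by blast
    with C show "(a, B) \<in> S" by simp
  qed
next
  assume "R \<subseteq> S"
  then show "ref_down R S"
    using subset_down_closure unfolding ref_down_def by blast
qed

lemma ref_up_iff_superset:
  assumes "inner_deterministic R" and "inner_univalent S"
  shows "ref_up R S \<longleftrightarrow> S \<subseteq> R"
proof
  assume "ref_up R S"
  show "S \<subseteq> R"
  proof clarify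
    fix a C assume "(a, C) \<in> S"
    with \<open>ref_up R S\<close> obtain B where B: "(a, B) \<in> R" "B \<subseteq> C"
      unfolding ref_up_def up_closure_def by blast
    with assms(1) obtain b where "B = {b}"
      unfolding inner_deterministic_def by blast
    with assms(2) \<open>(a, C) \<in> S\<close> B have "C = B"
      unfolding inner_univalent_def by blast
    with B show "(a, C) \<in> R" by simp
  qed
next
  assume "S \<subseteq> R"
  then show "ref_up R S"
    using subset_up_closure unfolding ref_up_def by blast
qed

lemma ref_updown_iff_eq:
  assumes "inner_deterministic R" and "inner_deterministic S"
  shows "ref_updown R S \<longleftrightarrow> R = S"
  using assms ref_down_iff_subset[of R S] ref_up_iff_superset[of R S]
    inner_deterministic_imp_inner_univalent[of S]
  unfolding ref_updown_def by blast

lemma inner_univalent_subset_if_ref_down_ref_up: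
  assumes "inner_univalent R" and "inner_univalent S"
    and "ref_down R S" and "ref_up S R"
  shows "R \<subseteq> S"
proof clarify
  fix a B assume "(a, B) \<in> R"
  with assms(1) consider "B = {}" | b where "B = {b}"
    unfolding inner_univalent_def by blast
  then show "(a, B) \<in> S"
  proof cases
    case 1
    from assms(4) \<open>(a, B) \<in> R\<close> obtain C where "(a, C) \<in> S" "C \<subseteq> B"
      unfolding ref_up_def up_closure_def by blast
    with 1 show ?thesis by simp
  next
    case (2 b)
    from assms(3) \<open>(a, B) \<in> R\<close> obtain C where C: "(a, C) \<in> S" "B \<subseteq> C"
      unfolding ref_down_def down_closure_def by blast
    with assms(2) 2 have "C = B"
      unfolding inner_univalent_def by blast
    with C show ?thesis by simp
  qed
qed

lemma ref_updown_antisym_inner_univalent: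
  assumes "inner_univalent R" and "inner_univalent S"
    and "ref_updown R S" and "ref_updown S R"
  shows "R = S"
  using assms inner_univalent_subset_if_ref_down_ref_up[of R S]
    inner_univalent_subset_if_ref_down_ref_up[of S R]
  unfolding ref_updown_def by blast

lemma outer_univalent_subset_if_ref_down_ref_down:
  assumes "outer_univalent R" and "ref_down R S" and "ref_down S R"
  shows "R \<subseteq> S"
proof clarify
  fix a B assume "(a, B) \<in> R"
  with assms(2) obtain C where C: "(a, C) \<in> S" "B \<subseteq> C"
    unfolding ref_down_def down_closure_def by blast
  with assms(3) obtain D where "(a, D) \<in> R" "C \<subseteq> D"
    unfolding ref_down_def down_closure_def by blast
  with assms(1) \<open>(a, B) \<in> R\<close> C have "C = B"
    unfolding outer_univalent_def by blast
  with C show "(a, B) \<in> S" by simp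
qed

lemma outer_univalent_subset_if_ref_up_ref_up:
  assumes "outer_univalent R" and "ref_up R S" and "ref_up S R"
  shows "R \<subseteq> S"
proof clarify
  fix a B assume "(a, B) \<in> R"
  with assms(3) obtain C where C: "(a, C) \<in> S" "C \<subseteq> B"
    unfolding ref_up_def up_closure_def by blast
  with assms(2) obtain D where "(a, D) \<in> R" "D \<subseteq> C"
    unfolding ref_up_def up_closure_def by blast
  with assms(1) \<open>(a, B) \<in> R\<close> C have "C = B"
    unfolding outer_univalent_def by blast
  with C show "(a, B) \<in> S" by simp
qed

lemma ref_down_antisym_outer_univalent:
  assumes "outer_univalent R" and "outer_univalent S"
    and "ref_down R S" and "ref_down S R"
  shows "R = S"
  using assms outer_univalent_subset_if_ref_down_ref_down by blast

lemma ref_up_antisym_outer_univalent: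
  assumes "outer_univalent R" and "outer_univalent S"
    and "ref_up R S" and "ref_up S R"
  shows "R = S"
  using assms outer_univalent_subset_if_ref_up_ref_up by blast

lemma ref_updown_antisym_outer_univalent:
  assumes "outer_univalent R" and "outer_univalent S"
    and "ref_updown R S" and "ref_updown S R"
  shows "R = S"
  using assms ref_down_antisym_outer_univalent unfolding ref_updown_def by blast

lemma outer_deterministic_iff:
  "outer_deterministic R \<longleftrightarrow> outer_univalent R \<and> Domain R = UNIV"
  unfolding outer_deterministic_def outer_univalent_def by blast

lemma ref_up_if_ref_down:
  assumes "outer_univalent S" and "Domain S \<subseteq> Domain R" and "ref_down R S"
  shows "ref_up R S"
  unfolding ref_up_def
proof clarify
  fix a C assume "(a, C) \<in> S"
  with assms(2) obtain B where B: "(a, B) \<in> R" by blast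
  with assms(3) obtain D where "(a, D) \<in> S" "B \<subseteq> D"
    unfolding ref_down_def down_closure_def by blast
  with assms(1) \<open>(a, C) \<in> S\<close> have "B \<subseteq> C"
    unfolding outer_univalent_def by blast
  with B show "(a, C) \<in> up_closure R"
    unfolding up_closure_def by blast
qed

lemma ref_down_if_ref_up:
  assumes "outer_univalent R" and "Domain R \<subseteq> Domain S" and "ref_up R S"
  shows "ref_down R S"
  unfolding ref_down_def
proof clarify
  fix a B assume "(a, B) \<in> R"
  with assms(2) obtain C where C: "(a, C) \<in> S" by blast
  with assms(3) obtain D where "(a, D) \<in> R" "D \<subseteq> C"
    unfolding ref_up_def up_closure_def by blast
  with assms(1) \<open>(a, B) \<in> R\<close> have "B \<subseteq> C"
    unfolding outer_univalent_def by blast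
  with C show "(a, B) \<in> down_closure S"
    unfolding down_closure_def by blast
qed

lemma ref_down_iff_ref_up_outer_deterministic:
  assumes "outer_deterministic R" and "outer_deterministic S"
  shows "ref_down R S \<longleftrightarrow> ref_up R S"
proof -
  have "outer_univalent R" "outer_univalent S" "Domain R = Domain S"
    using assms unfolding outer_deterministic_iff by simp_all
  then show ?thesis
    using ref_up_if_ref_down[of S R] ref_down_if_ref_up[of R S] by blast
qed

theorem proposition5p8:
  shows
  "(\<forall>R S :: ('a, 'b) mrel. inner_deterministic R \<and> inner_deterministic S \<longrightarrow>
        (ref_down R S \<longleftrightarrow> R \<subseteq> S) \<and> (ref_up R S \<longleftrightarrow> S \<subseteq> R) \<and> (ref_updown R S \<longleftrightarrow> R = S))
   \<and> (\<forall>R S :: ('a, 'b) mrel. inner_univalent R \<and> inner_univalent S \<and> ref_updown R S \<and> ref_updown S R \<longrightarrow> R = S)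
   \<and> (\<forall>R S :: ('a, 'b) mrel. outer_univalent R \<and> outer_univalent S \<longrightarrow>
        (ref_down R S \<and> ref_down S R \<longrightarrow> R = S) \<and>
        (ref_up R S \<and> ref_up S R \<longrightarrow> R = S) \<and>
        (ref_updown R S \<and> ref_updown S R \<longrightarrow> R = S))
   \<and> (\<forall>R S :: ('a, 'b) mrel. outer_deterministic R \<and> outer_deterministic S \<longrightarrow>
        (ref_down R S \<longleftrightarrow> ref_up R S) \<and> (ref_up R S \<longleftrightarrow> ref_updown R S))"
proof (intro conjI allI impI; elim conjE)
  fix R S :: "('a, 'b) mrel"
  assume "inner_deterministic R" "inner_deterministic S"
  then show "ref_down R S \<longleftrightarrow> R \<subseteq> S" "ref_up R S \<longleftrightarrow> S \<subseteq> R"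
    "ref_updown R S \<longleftrightarrow> R = S"
    by (simp_all add: ref_down_iff_subset ref_up_iff_superset ref_updown_iff_eq
        inner_deterministic_imp_inner_univalent)
next
  fix R S :: "('a, 'b) mrel"
  assume "inner_univalent R" "inner_univalent S" "ref_updown R S" "ref_updown S R"
  then show "R = S" by (rule ref_updown_antisym_inner_univalent)
next
  fix R S :: "('a, 'b) mrel"
  assume outer: "outer_univalent R" "outer_univalent S"
  show "R = S" if "ref_down R S" "ref_down S R"
    using outer that by (rule ref_down_antisym_outer_univalent)
  show "R = S" if "ref_up R S" "ref_up S R"
    using outer that by (rule ref_up_antisym_outer_univalent)
  show "R = S" if "ref_updown R S" "ref_updown S R"
    using outer that by (rule ref_updown_antisym_outer_univalent)
next
  fix R S :: "('a, 'b) mrel"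
  assume "outer_deterministic R" "outer_deterministic S"
  then have "ref_down R S \<longleftrightarrow> ref_up R S"
    by (rule ref_down_iff_ref_up_outer_deterministic)
  then show "ref_down R S \<longleftrightarrow> ref_up R S" "ref_up R S \<longleftrightarrow> ref_updown R S"
    unfolding ref_updown_def by blast+
qed

end
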